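(* Let $m\ge 1$ and $p\in S_m$. Then the following are equivalent: (i) for every $n\ge 2$, only finitely many $\omega\in\widetilde{S}_n$ avoid $p$; (ii) $p$ avoids the pattern $321$. Moreover, if $p$ contains $321$ then for every $n\ge2$ there are infinitely many $\omega\in\widetilde{S}_n$ avoiding $p$.
   Context: For $n\ge 2$, the affine symmetric group $\widetilde{S}_n$ is the set of bijections $\omega:\mathbb{Z}\to\mathbb{Z}$ such that $\omega(i+n)=\omega(i)+n$ for all $i\in\mathbb{Z}$ and $\sum_{i=1}^n\omega(i)=\binom{n+1}{2}$; write $\omega_i=\omega(i)$, and $[\omega_1,\dots,\omega_n]$ (the base window) determines $\omega$. For $p\in S_k$ (a permutation of $\{1,\dots,k\}$, written in one-line notation $p_1\cdots p_k$), $\omega$ contains $p$ if there exist integers $i_1<\cdots<i_k$ (arbitrary integers, not necessarily in $\{1,\dots,n\}$) such that $\omega_{i_1}\cdots\omega_{i_k}$ has the same relative order as $p_1\cdots p_k$ (i.e. $\omega_{i_a}<\omega_{i_b}$ iff $p_a<p_b$); otherwise $\omega$ avoids $p$. The same notion of containment/avoidance is used between ordinary permutations. *)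

theory Defs
  imports "HOL-Combinatorics.Permutations"
begin

definition affine_perms :: "nat \<Rightarrow> (int \<Rightarrow> int) set" where
  "affine_perms n = {w. bij w \<and> (\<forall>i. w (i + int n) = w i + int n) \<and>
      (\<Sum>i = 1..int n. w i) = int n * (int n + 1) div 2}"

definition occurs :: "('a::linorder \<Rightarrow> 'b::linorder) \<Rightarrow> 'a set \<Rightarrow> (nat \<Rightarrow> nat) \<Rightarrow> nat \<Rightarrow> bool" where
  "occurs w D q k \<longleftrightarrow> (\<exists>idx :: nat \<Rightarrow> 'a.
      (\<forall>a\<in>{1..k}. idx a \<in> D) \<and>
      (\<forall>a\<in>{1..k}. \<forall>b\<in>{1..k}. a < b \<longrightarrow> idx a < idx b) \<and>
      (\<forall>a\<in>{1..k}. \<forall>b\<in>{1..k}. w (idx a) < w (idx b) \<longleftrightarrow> q a < q b))"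

definition aff_contains :: "(int \<Rightarrow> int) \<Rightarrow> (nat \<Rightarrow> nat) \<Rightarrow> nat \<Rightarrow> bool" where
  "aff_contains w p m \<longleftrightarrow> occurs w UNIV p m"

definition perm_contains :: "(nat \<Rightarrow> nat) \<Rightarrow> nat \<Rightarrow> (nat \<Rightarrow> nat) \<Rightarrow> nat \<Rightarrow> bool" where
  "perm_contains p m q k \<longleftrightarrow> occurs p {1..m} q k"

definition pat321 :: "nat \<Rightarrow> nat" where
  "pat321 i = 4 - i"

end

theory Submission
  imports Defs
begin

(* If p contains 321, it suffices to exhibit infinitely many 321-avoiding affine
   permutations, since containment of patterns is transitive.  The "wedges" below
   move each integer by one of only two displacements, which rules out a 321.

   If p avoids 321, it is a merge of its left-to-right maxima and the remaining
   (also increasing) entries.  Whenever two window values w(r), w(s) differ by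
   at least n 2^m, periodicity provides two parallel "lines" of values
   w(r) + n t and w(s) + n t, and a carefully chosen height function (level)
   embeds p into them, so w contains p.  Hence every avoider has window spread
   below n 2^m; together with the fixed window sum this bounds the window, and
   an affine permutation is determined by its window, so there are finitely many. *)

lemma occurs_trans:
  assumes "occurs w D p m" and "occurs p {1..m} q k"
  shows "occurs w D q k"
proof -
  obtain f where f: "\<forall>a\<in>{1..m}. f a \<in> D"
      "\<forall>a\<in>{1..m}. \<forall>b\<in>{1..m}. a < b \<longrightarrow> f a < f b"
      "\<forall>a\<in>{1..m}. \<forall>b\<in>{1..m}. w (f a) < w (f b) \<longleftrightarrow> p a < p b"
    using assms(1) unfolding occurs_def by blast
  obtain g where g: "\<forall>a\<in>{1..k}. g a \<in> {1..m}"
      "\<forall>a\<in>{1..k}. \<forall>b\<in>{1..k}. a < b \<longrightarrow> g a < g b"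
      "\<forall>a\<in>{1..k}. \<forall>b\<in>{1..k}. p (g a) < p (g b) \<longleftrightarrow> q a < q b"
    using assms(2) unfolding occurs_def by blast
  show ?thesis
    unfolding occurs_def by (rule exI[of _ "f \<circ> g"]) (use f g in auto)
qed

lemma occurs_321_iff:
  "occurs w D pat321 3 \<longleftrightarrow>
     (\<exists>a\<in>D. \<exists>b\<in>D. \<exists>c\<in>D. a < b \<and> b < c \<and> w b < w a \<and> w c < w b)"
proof
  assume "occurs w D pat321 3"
  then obtain idx where idx: "\<forall>a\<in>{1..3}. idx a \<in> D"
      "\<forall>a\<in>{1..3}. \<forall>b\<in>{1..3}. a < b \<longrightarrow> idx a < idx b"
      "\<forall>a\<in>{1..3}. \<forall>b\<in>{1..3}. w (idx a) < w (idx b) \<longleftrightarrow> pat321 a < pat321 b"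
    unfolding occurs_def by blast
  have "w (idx 2) < w (idx 1)" "w (idx 3) < w (idx 2)"
    using idx(3)[rule_format, of 2 1] idx(3)[rule_format, of 3 2] by (auto simp: pat321_def)
  moreover have "idx 1 < idx 2" "idx 2 < idx 3" "idx 1 \<in> D" "idx 2 \<in> D" "idx 3 \<in> D"
    using idx(1,2) by auto
  ultimately show "\<exists>a\<in>D. \<exists>b\<in>D. \<exists>c\<in>D. a < b \<and> b < c \<and> w b < w a \<and> w c < w b"
    by blast
next
  assume "\<exists>a\<in>D. \<exists>b\<in>D. \<exists>c\<in>D. a < b \<and> b < c \<and> w b < w a \<and> w c < w b"
  then obtain a b c where abc: "a \<in> D" "b \<in> D" "c \<in> D" "a < b" "b < c" "w b < w a" "w c < w b"
    by blast
  define idx :: "nat \<Rightarrow> _" where "idx x = (if x = 1 then a else if x = 2 then b else c)" for x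
  have three: "{1..3::nat} = {1, 2, 3}" by auto
  show "occurs w D pat321 3"
    unfolding occurs_def
    by (rule exI[of _ idx]) (use abc in \<open>auto simp: three idx_def pat321_def\<close>)
qed

lemma affine_shift:
  fixes w :: "int \<Rightarrow> int"
  assumes "\<forall>i. w (i + int n) = w i + int n"
  shows "w (i + int n * q) = w i + int n * q"
proof -
  have nat_shift: "w (j + int n * int t) = w j + int n * int t" for j t
  proof (induction t)
    case (Suc t)
    have "w (j + int n * int (Suc t)) = w ((j + int n * int t) + int n)"
      by (simp add: algebra_simps)
    also have "\<dots> = w j + int n * int t + int n" using assms Suc by simp
    finally show ?case by (simp add: algebra_simps)
  qed simp
  show ?thesis
  proof (cases "q \<ge> 0")
    case True
    then show ?thesis using nat_shift[of i "nat q"] by simp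
  next
    case False
    then show ?thesis using nat_shift[of "i + int n * q" "nat (- q)"] by simp
  qed
qed

(* If the displacement w(i) - i takes only two values then w has no 321:
   along a decreasing triple the displacement would strictly decrease twice. *)
lemma two_displacements_no_321:
  fixes w :: "int \<Rightarrow> int"
  assumes "\<And>i. w i - i \<in> {d1, d2}"
  shows "\<not> occurs w UNIV pat321 3"
proof
  assume "occurs w UNIV pat321 3"
  then obtain a b c where "a < b" "b < c" "w b < w a" "w c < w b"
    unfolding occurs_321_iff by blast
  then have "w a - a > w b - b" "w b - b > w c - c" by auto
  then show False using assms[of a] assms[of b] assms[of c] by auto
qed

(* Shifting every integer by an n-periodic amount divisible by n preserves
   residues mod n, hence the shift amount, so it is undone by the opposite shift. *)
lemma periodic_shift_bij:
  fixes d :: "int \<Rightarrow> int"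
  assumes per: "\<And>i. d (i + int n) = d i" and dvd: "\<And>i. int n dvd d i"
  shows "bij (\<lambda>i. i + d i)"
proof -
  have shift: "d (i + int n * t) = d i" for i t
    using affine_shift[of "\<lambda>i. i + d i" n i t] per by (simp add: algebra_simps)
  have invariant: "d (i + d i) = d i" "d (i - d i) = d i" for i
  proof -
    obtain t where "d i = int n * t" using dvd[of i] by blast
    then show "d (i + d i) = d i" "d (i - d i) = d i"
      using shift[of i t] shift[of i "- t"] by simp_all
  qed
  show ?thesis
    by (rule bij_betw_byWitness[where f' = "\<lambda>j. j - d j"]) (auto simp: invariant)
qed

lemma periodic_shift_affine:
  fixes d :: "int \<Rightarrow> int"
  assumes n: "n \<ge> 1" and per: "\<And>i. d (i + int n) = d i" and dvd: "\<And>i. int n dvd d i"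
    and balanced: "(\<Sum>i = 1..int n. d i) = 0"
  shows "(\<lambda>i. i + d i) \<in> affine_perms n"
proof -
  have "(\<Sum>i = 1..int n. i + d i) = (\<Sum>i = 1..int n. i)"
    using balanced by (simp add: sum.distrib)
  also have "\<dots> = int n * (int n + 1) div 2"
    using Sum_Icc_int[of 1 "int n"] n by simp
  finally show ?thesis
    unfolding affine_perms_def using periodic_shift_bij[of d n, OF per dvd] per by simp
qed

(* The witnesses for infinitely many avoiders: multiples of n move up by
   kn(n - 1), all other integers move down by kn.  Only two displacements occur. *)
definition wedge :: "nat \<Rightarrow> nat \<Rightarrow> int \<Rightarrow> int" where
  "wedge n k i = i + (if int n dvd i then int n * int k * (int n - 1) else - (int n * int k))"

lemma wedge_affine:
  assumes n: "n \<ge> 1"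
  shows "wedge n k \<in> affine_perms n"
proof -
  define d where "d i = (if int n dvd i then int n * int k * (int n - 1) else - (int n * int k))"
    for i
  have window: "{1..int n} = insert (int n) {1..int n - 1}" using n by auto
  have no_multiple: "\<not> int n dvd i" if "i \<in> {1..int n - 1}" for i
    using that zdvd_not_zless[of i "int n"] by auto
  have "(\<Sum>i = 1..int n. d i) = d (int n) + (\<Sum>i = 1..int n - 1. d i)"
    unfolding window by (simp add: sum.insert)
  also have "(\<Sum>i = 1..int n - 1. d i) = (\<Sum>i = 1..int n - 1. - (int n * int k))"
    using no_multiple unfolding d_def by (intro sum.cong) auto
  finally have "(\<Sum>i = 1..int n. d i) = 0"
    using n unfolding d_def by (simp add: algebra_simps)
  moreover have "d (i + int n) = d i" "int n dvd d i" for i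
    unfolding d_def by (simp_all add: dvd_add_left_iff)
  ultimately show ?thesis
    using periodic_shift_affine[OF n, of d] unfolding wedge_def d_def by simp
qed

(* Different k give different affine permutations (compare the value at n). *)
lemma wedge_inj:
  assumes "n \<ge> 2"
  shows "inj (wedge n)"
proof
  fix k1 k2 assume "wedge n k1 = wedge n k2"
  then have "wedge n k1 (int n) = wedge n k2 (int n)" by simp
  then have "(int n * (int n - 1)) * int k1 = (int n * (int n - 1)) * int k2"
    unfolding wedge_def by (simp add: algebra_simps)
  then show "k1 = k2" using assms by simp
qed

theorem contains_321_infinitely_many_avoiders:
  assumes "perm_contains p m pat321 3" and "n \<ge> 2"
  shows "infinite {w \<in> affine_perms n. \<not> aff_contains w p m}"
proof -
  have "\<not> aff_contains (wedge n k) p m" for k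
  proof
    assume "aff_contains (wedge n k) p m"
    then have "occurs (wedge n k) UNIV pat321 3"
      using assms(1) occurs_trans unfolding aff_contains_def perm_contains_def by blast
    moreover have "wedge n k i - i \<in> {int n * int k * (int n - 1), - (int n * int k)}" for i
      unfolding wedge_def by simp
    ultimately show False using two_displacements_no_321 by blast
  qed
  then have "range (wedge n) \<subseteq> {w \<in> affine_perms n. \<not> aff_contains w p m}"
    using wedge_affine assms(2) by auto
  moreover have "infinite (range (wedge n))"
    using wedge_inj[OF assms(2)] by (simp add: infinite_UNIV_char_0 finite_image_iff)
  ultimately show ?thesis using finite_subset by blast
qed

(* Left-to-right maxima of p on positions 1, 2, ...  For 321-avoiding p the
   remaining entries are increasing as well, so p is a merge of two increasing
   sequences: the maxima and the rest. *)
definition lr_max :: "(nat \<Rightarrow> nat) \<Rightarrow> nat \<Rightarrow> bool" where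
  "lr_max p k \<longleftrightarrow> (\<forall>h. 1 \<le> h \<and> h < k \<longrightarrow> p h < p k)"

definition smaller_lr_maxima :: "(nat \<Rightarrow> nat) \<Rightarrow> nat \<Rightarrow> nat set" where
  "smaller_lr_maxima p k = {h. 1 \<le> h \<and> h < k \<and> lr_max p h \<and> p h < p k}"

definition last_smaller_lr_max :: "(nat \<Rightarrow> nat) \<Rightarrow> nat \<Rightarrow> nat" where
  "last_smaller_lr_max p k = Max (insert 0 (smaller_lr_maxima p k))"

lemma finite_smaller_lr_maxima: "finite (smaller_lr_maxima p k)"
  by (rule finite_subset[of _ "{..<k}"]) (auto simp: smaller_lr_maxima_def)

lemma last_smaller_lr_max_less: "k \<ge> 1 \<Longrightarrow> last_smaller_lr_max p k < k"
  unfolding last_smaller_lr_max_def using finite_smaller_lr_maxima[of p k]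
  by (subst Max_less_iff) (auto simp: smaller_lr_maxima_def)

lemma last_smaller_lr_max_ge: "h \<in> smaller_lr_maxima p k \<Longrightarrow> h \<le> last_smaller_lr_max p k"
  unfolding last_smaller_lr_max_def using finite_smaller_lr_maxima[of p k] by (intro Max_ge) auto

lemma last_smaller_lr_max_le:
  "(\<And>h. h \<in> smaller_lr_maxima p k \<Longrightarrow> h \<le> b) \<Longrightarrow> last_smaller_lr_max p k \<le> b"
  unfolding last_smaller_lr_max_def using finite_smaller_lr_maxima[of p k] by (subst Max_le_iff) auto

(* In a 321-avoiding permutation each entry that is not a left-to-right
   maximum is smaller than every later entry (else an earlier larger entry,
   this one and the later one form a 321). *)
lemma non_lr_max_increasing:
  assumes p: "p permutes {1..m}" and av: "\<not> perm_contains p m pat321 3"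
    and ab: "a < b" "a \<in> {1..m}" "b \<in> {1..m}" and not_max: "\<not> lr_max p a"
  shows "p a < p b"
proof (rule ccontr)
  have inj: "inj p" using p by (rule permutes_inj)
  assume "\<not> p a < p b"
  with inj ab have "p b < p a" by (metis inj_eq linorder_neqE less_irrefl)
  moreover obtain h where h: "1 \<le> h" "h < a" "\<not> p h < p a"
    using not_max unfolding lr_max_def by blast
  moreover have "p h \<noteq> p a" using inj h(2) by (metis inj_eq less_irrefl)
  ultimately have "perm_contains p m pat321 3"
    using ab unfolding perm_contains_def occurs_321_iff
    by (intro bexI[of _ h] bexI[of _ a] bexI[of _ b]) auto
  with av show False by simp
qed

(* Entry k of p will be placed at height level(k)
   on one of two parallel lines, the line of the maxima lying C above the
   other.  A non-maximum is lifted to at least C above the last smaller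
   maximum before it; the increments 2^(m-k) shrink so fast that it still
   stays less than C above every larger maximum (lemma level_below). *)
function level :: "(nat \<Rightarrow> nat) \<Rightarrow> nat \<Rightarrow> int \<Rightarrow> nat \<Rightarrow> int" where
  "level p m C 0 = 0"
| "level p m C (Suc k) =
     (if lr_max p (Suc k) then level p m C k
      else max (level p m C k) (level p m C (last_smaller_lr_max p (Suc k)) + C))
     + 2 ^ (m - Suc k)"
  by pat_completeness auto
termination
  by (relation "measure (\<lambda>(p, m, C, k). k)")
     (auto simp: less_Suc_eq_le[symmetric] intro: last_smaller_lr_max_less)

lemma level_step: "level p m C k + 1 \<le> level p m C (Suc k)"
proof -
  have "level p m C k + 2 ^ (m - Suc k) \<le> level p m C (Suc k)" by simp
  moreover have "(1::int) \<le> 2 ^ (m - Suc k)" by simp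
  ultimately show ?thesis by linarith
qed

lemma level_strict_mono: "a < b \<Longrightarrow> level p m C a < level p m C b"
proof (rule lift_Suc_mono_less[of "level p m C"])
  show "level p m C k < level p m C (Suc k)" for k
    using level_step[of p m C k] by linarith
qed

lemma level_mono: "a \<le> b \<Longrightarrow> level p m C a \<le> level p m C b"
  using level_strict_mono[of a b p m C] by (cases "a = b") auto

lemma level_above:
  assumes "lr_max p i" "\<not> lr_max p j" "1 \<le> i" "i < j" "p i < p j"
  shows "level p m C i + C + 1 \<le> level p m C j"
proof -
  obtain k where j: "j = Suc k" using assms(4) by (cases j) auto
  have "i \<in> smaller_lr_maxima p j" using assms unfolding smaller_lr_maxima_def by auto
  then have "level p m C i \<le> level p m C (last_smaller_lr_max p j)"
    by (intro level_mono last_smaller_lr_max_ge)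
  moreover have "level p m C j =
      max (level p m C k) (level p m C (last_smaller_lr_max p j) + C) + 2 ^ (m - j)"
    using assms(2) unfolding j by simp
  moreover have "(1::int) \<le> 2 ^ (m - j)" by simp
  ultimately show ?thesis by linarith
qed

(* Invariant for level_below: starting at a maximum i0, as long as no later
   non-maximum is lifted above the maxima preceding i0, the heights plus the
   remaining increment budget 2^(m-k) stay below level(i0 - 1) + C + 2^(m - i0). *)
lemma level_growth_bound:
  assumes i0: "lr_max p i0" "1 \<le> i0" and k: "i0 \<le> k" "k \<le> m" and C: "2 ^ m \<le> C"
    and before: "\<And>h. i0 < h \<Longrightarrow> h \<le> k \<Longrightarrow> \<not> lr_max p h \<Longrightarrow> last_smaller_lr_max p h < i0"
  shows "level p m C k + 2 ^ (m - k) \<le> level p m C (i0 - 1) + C + 2 ^ (m - i0)"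
  using k before
proof (induction k rule: dec_induct)
  case base
  have "level p m C i0 = level p m C (i0 - 1) + 2 ^ (m - i0)"
    using i0 level.simps(2)[of p m C "i0 - 1"] by simp
  moreover have "(2::int) ^ (m - i0) \<le> 2 ^ m" by (rule power_increasing) auto
  ultimately show ?case using C by linarith
next
  case (step k)
  have halves: "(2::int) ^ (m - Suc k) + 2 ^ (m - Suc k) = 2 ^ (m - k)"
    using step.prems(1) by (simp flip: mult_2 power_Suc add: Suc_diff_Suc)
  have IH: "level p m C k + 2 ^ (m - k) \<le> level p m C (i0 - 1) + C + 2 ^ (m - i0)"
    using step by simp
  show ?case
  proof (cases "lr_max p (Suc k)")
    case True
    then show ?thesis using IH halves by simp
  next
    case False
    have "level p m C (last_smaller_lr_max p (Suc k)) \<le> level p m C (i0 - 1)"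
      using step.prems(2)[of "Suc k"] step.hyps False by (intro level_mono) auto
    moreover have "(2::int) ^ (m - k) \<le> 2 ^ (m - i0)"
      by (rule power_increasing) (use step.hyps in auto)
    moreover have "level p m C (Suc k) = 2 ^ (m - Suc k) +
        max (level p m C k) (level p m C (last_smaller_lr_max p (Suc k)) + C)"
      using False by simp
    ultimately show ?thesis using IH halves by linarith
  qed
qed

(* Take
   the first maximum i0 exceeding p(j); by 321-avoidance no non-maximum up to j
   is lifted relative to a maximum from i0 on, and the growth bound applies. *)
lemma level_below:
  assumes p: "p permutes {1..m}" and av: "\<not> perm_contains p m pat321 3"
    and ij: "lr_max p i" "i < j" "j \<le> m" "p j < p i" and C: "2 ^ m \<le> C"
  shows "level p m C j < level p m C i + C"
proof -
  define P where "P h \<longleftrightarrow> lr_max p h \<and> p j < p h" for h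
  define i0 where "i0 = (LEAST h. P h)"
  have "P i" using ij by (simp add: P_def)
  then have P_i0: "P i0" and i0_le: "i0 \<le> i"
    unfolding i0_def by (auto intro: LeastI Least_le)
  have "p 0 = 0" using p by (simp add: permutes_def)
  then have i0_pos: "1 \<le> i0" using P_i0 by (cases i0) (auto simp: P_def)
  have below_i0: "h < i0" if h: "lr_max p h" "p h \<le> p j" for h
  proof (rule ccontr)
    assume "\<not> h < i0"
    then have "p i0 \<le> p h" using h(1) i0_pos unfolding lr_max_def by (cases "i0 = h") auto
    then show False using P_i0 h(2) unfolding P_def by simp
  qed
  have "level p m C j + 2 ^ (m - j) \<le> level p m C (i0 - 1) + C + 2 ^ (m - i0)"
  proof (rule level_growth_bound)
    fix h assume h: "i0 < h" "h \<le> j" "\<not> lr_max p h"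
    have "p h \<le> p j"
      using non_lr_max_increasing[OF p av, of h j] h ij i0_pos by (cases "h = j") auto
    then show "last_smaller_lr_max p h < i0"
      using below_i0 i0_pos last_smaller_lr_max_le[of p h "i0 - 1"]
      unfolding smaller_lr_maxima_def by fastforce
  qed (use P_i0 i0_pos i0_le ij C P_def in auto)
  moreover have "level p m C i0 = level p m C (i0 - 1) + 2 ^ (m - i0)"
    using P_i0 i0_pos level.simps(2)[of p m C "i0 - 1"] unfolding P_def by simp
  moreover have "level p m C i0 \<le> level p m C i" using i0_le by (rule level_mono)
  moreover have "(1::int) \<le> 2 ^ (m - j)" by simp
  ultimately show ?thesis by linarith
qed

lemma two_line_realizes:
  fixes N G :: int
  assumes p: "p permutes {1..m}" and av: "\<not> perm_contains p m pat321 3"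
    and N: "0 < N" and G: "N * C \<le> G" "G < N * C + N" and C: "2 ^ m \<le> C"
    and ab: "a < b" "a \<in> {1..m}" "b \<in> {1..m}"
  defines "V k \<equiv> N * level p m C k + (if lr_max p k then G else 0)"
  shows "V a < V b \<longleftrightarrow> p a < p b"
proof -
  have scale: "N * x < N * y \<longleftrightarrow> x < y" for x y using N by simp
  have level_ab: "level p m C a < level p m C b" using ab(1) by (rule level_strict_mono)
  have "(0::int) < 2 ^ m" by simp
  then have "0 < C" using C by linarith
  then have "0 < N * C" using N by simp
  then have G_pos: "0 < G" using G(1) by linarith
  show ?thesis
  proof (cases "lr_max p b")
    case b_max: True
    then have "p a < p b" using ab unfolding lr_max_def by auto
    moreover have "V a < V b"
      using level_ab scale[of "level p m C a" "level p m C b"] b_max G_pos unfolding V_def by auto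
    ultimately show ?thesis by simp
  next
    case b_not_max: False
    show ?thesis
    proof (cases "lr_max p a")
      case a_not_max: False
      then show ?thesis
        using non_lr_max_increasing[OF p av ab a_not_max] level_ab b_not_max scale
        unfolding V_def by auto
    next
      case a_max: True
      have "p a \<noteq> p b" using p ab(1) by (metis permutes_inj inj_eq less_irrefl)
      then consider "p a < p b" | "p b < p a" by linarith
      then show ?thesis
      proof cases
        case 1
        then have "N * (level p m C a + C + 1) \<le> N * level p m C b"
          using level_above[OF a_max b_not_max _ ab(1) 1] ab N by simp
        then have "V a < V b" using G a_max b_not_max unfolding V_def by (simp add: algebra_simps)
        then show ?thesis using 1 by simp
      next
        case 2
        then have "N * level p m C b < N * (level p m C a + C)"
          using level_below[OF p av a_max ab(1) _ 2 C] ab N by simp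
        then have "\<not> V a < V b" using G a_max b_not_max unfolding V_def by (simp add: algebra_simps)
        then show ?thesis using 2 by simp
      qed
    qed
  qed
qed

lemma same_order_from_pairs:
  fixes f :: "'a::linorder \<Rightarrow> 'b::linorder" and g :: "'a \<Rightarrow> 'c::linorder"
  assumes pairs: "\<And>a b. a \<in> A \<Longrightarrow> b \<in> A \<Longrightarrow> a < b \<Longrightarrow> f a < f b \<longleftrightarrow> g a < g b"
    and "inj_on f A" "inj_on g A"
  shows "\<forall>a\<in>A. \<forall>b\<in>A. f a < f b \<longleftrightarrow> g a < g b"
proof (intro ballI)
  fix a b assume ab: "a \<in> A" "b \<in> A"
  show "f a < f b \<longleftrightarrow> g a < g b"
  proof (cases a b rule: linorder_cases)
    case greater
    then have "f a \<noteq> f b" "g a \<noteq> g b" using ab assms(2,3) by (auto dest: inj_onD)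
    then show ?thesis using pairs[OF ab(2,1) greater] by auto
  qed (use pairs ab in auto)
qed

(* Entries are placed at positions
   r + n level(k) (maxima) and s + n level(k) (others); by periodicity their
   values lie on two lines n level(k) + w r and n level(k) + w s. *)
lemma large_spread_contains:
  assumes w: "w \<in> affine_perms n" and n: "n \<ge> 1"
    and p: "p permutes {1..m}" and av: "\<not> perm_contains p m pat321 3"
    and rs: "r \<in> {1..int n}" "s \<in> {1..int n}" and spread: "int n * 2 ^ m \<le> w r - w s"
  shows "aff_contains w p m"
proof -
  have per: "\<forall>i. w (i + int n) = w i + int n" and "inj w"
    using w unfolding affine_perms_def by (auto intro: bij_is_inj)
  define N where "N = int n"
  define G where "G = w r - w s"
  define C where "C = G div N"
  have N: "0 < N" using n unfolding N_def by simp
  have G: "N * C \<le> G" "G < N * C + N"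
    using N unfolding C_def
    by (simp_all add: mult.commute[of N] minus_mod_eq_div_mult[symmetric] pos_mod_bound)
  have C: "2 ^ m \<le> C"
    using zdiv_mono1[OF spread[folded G_def N_def] N] N unfolding C_def by simp
  define z where "z = level p m C"
  define V where "V k = N * z k + (if lr_max p k then G else 0)" for k
  define idx where "idx k = (if lr_max p k then r else s) + N * z k" for k
  have shifted_value: "w (idx k) = w s + V k" for k
    using affine_shift[OF per] unfolding idx_def V_def G_def N_def by simp
  have increasing: "idx a < idx b" if "a < b" for a b
  proof -
    have "z a < z b" using level_strict_mono[OF that] unfolding z_def .
    then have "N * (z a + 1) \<le> N * z b" using N by (intro mult_left_mono) auto
    then have "N * z a + N \<le> N * z b" by (simp add: algebra_simps)
    then show ?thesis using rs \<open>z a < z b\<close> unfolding idx_def N_def by auto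
  qed
  have "\<forall>a\<in>{1..m}. \<forall>b\<in>{1..m}. w (idx a) < w (idx b) \<longleftrightarrow> p a < p b"
  proof (rule same_order_from_pairs)
    show "w (idx a) < w (idx b) \<longleftrightarrow> p a < p b" if "a \<in> {1..m}" "b \<in> {1..m}" "a < b" for a b
      using two_line_realizes[OF p av N G C that(3,1,2)] shifted_value unfolding V_def z_def by simp
    show "inj_on (\<lambda>k. w (idx k)) {1..m}"
    proof -
      have "inj idx" using increasing by (intro strict_mono_imp_inj_on strict_monoI)
      then show ?thesis using \<open>inj w\<close> by (auto intro!: inj_onI dest: injD)
    qed
    show "inj_on p {1..m}" using permutes_inj[OF p] by (rule inj_on_subset) simp
  qed
  then show ?thesis
    unfolding aff_contains_def occurs_def by (intro exI[of _ idx]) (use increasing in auto)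
qed

lemma affine_perm_window_determines:
  assumes "w1 \<in> affine_perms n" "w2 \<in> affine_perms n" "n \<ge> 1"
    and window: "\<forall>i\<in>{1..int n}. w1 i = w2 i"
  shows "w1 = w2"
proof
  fix x
  have per1: "\<forall>i. w1 (i + int n) = w1 i + int n" and per2: "\<forall>i. w2 (i + int n) = w2 i + int n"
    using assms unfolding affine_perms_def by blast+
  define r where "r = (x - 1) mod int n + 1"
  have x: "x = r + int n * ((x - 1) div int n)" unfolding r_def by (simp add: algebra_simps)
  have n: "0 < int n" using assms(3) by simp
  have "r \<in> {1..int n}"
    unfolding r_def using pos_mod_bound[OF n, of "x - 1"] pos_mod_sign[OF n, of "x - 1"] by simp
  then show "w1 x = w2 x"
    by (subst (1 2) x) (simp add: affine_shift[OF per1] affine_shift[OF per2] window)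
qed

lemma finite_bounded_windows:
  assumes "n \<ge> 1"
  shows "finite {w \<in> affine_perms n. \<forall>i\<in>{1..int n}. \<bar>w i\<bar> \<le> K}"
    (is "finite ?S")
proof -
  have "restrict w {1..int n} \<in> (\<Pi>\<^sub>E i\<in>{1..int n}. {-K..K})" if "w \<in> ?S" for w
    using that by (auto simp: abs_le_iff)
  then have "(\<lambda>w. restrict w {1..int n}) ` ?S \<subseteq> (\<Pi>\<^sub>E i\<in>{1..int n}. {-K..K})" by blast
  then have "finite ((\<lambda>w. restrict w {1..int n}) ` ?S)"
    by (rule finite_subset) (simp add: finite_PiE)
  moreover have "inj_on (\<lambda>w. restrict w {1..int n}) ?S"
  proof (rule inj_onI)
    fix w1 w2 assume "w1 \<in> ?S" "w2 \<in> ?S" and eq: "restrict w1 {1..int n} = restrict w2 {1..int n}"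
    have "\<forall>i\<in>{1..int n}. w1 i = w2 i"
      using fun_cong[OF eq] by (metis restrict_apply')
    then show "w1 = w2"
      using affine_perm_window_determines[of w1 n w2] assms \<open>w1 \<in> ?S\<close> \<open>w2 \<in> ?S\<close> by blast
  qed
  ultimately show ?thesis by (rule finite_imageD)
qed

(* Small spread on the window plus the window sum n(n+1)/2 bounds every window
   value, by comparing w(i) with the average of the window. *)
lemma small_spread_bounded_window:
  assumes w: "w \<in> affine_perms n" and n: "n \<ge> 1"
    and spread: "\<And>r s. r \<in> {1..int n} \<Longrightarrow> s \<in> {1..int n} \<Longrightarrow> w r - w s < B"
    and i: "i \<in> {1..int n}"
  shows "\<bar>w i\<bar> \<le> B + int n + 1"
proof -
  define N where "N = int n"
  define T where "T = (\<Sum>s = 1..N. w s)"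
  have N: "0 < N" "card {1..N} = n" "{1..N} \<noteq> {}" using n unfolding N_def by auto
  have "T = N * (N + 1) div 2" using w unfolding affine_perms_def T_def N_def by blast
  then have T: "0 \<le> T" "T \<le> N * (N + 1)" using N(1) int_div_le_self[of "N * (N + 1)" 2] by simp_all
  have gap: "w i < w s + B" "w s < w i + B" if "s \<in> {1..N}" for s
    using spread[OF i, of s] spread[OF _ i, of s] that unfolding N_def by auto
  have "N * w i = (\<Sum>s = 1..N. w i)" using N(2) unfolding N_def by simp
  also have "\<dots> < (\<Sum>s = 1..N. w s + B)"
    using gap N(3) by (intro sum_strict_mono) auto
  also have "\<dots> = T + N * B" using N(2) unfolding T_def N_def by (simp add: sum.distrib)
  finally have "N * w i < N * (N + 1 + B)" using T(2) by (simp add: algebra_simps)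
  then have upper: "w i < N + 1 + B" using N(1) by simp
  have "T < (\<Sum>s = 1..N. w i + B)"
    unfolding T_def using gap N(3) by (intro sum_strict_mono) auto
  also have "\<dots> = N * (w i + B)" using N(2) unfolding N_def by simp
  finally have "0 < N * (w i + B)" using T(1) by simp
  then have lower: "0 < w i + B" using N(1) by (simp add: zero_less_mult_iff)
  have "0 < B" using spread[OF i i] by simp
  then show ?thesis using upper lower unfolding N_def by auto
qed

theorem avoid_321_finitely_many_avoiders:
  assumes p: "p permutes {1..m}" and av: "\<not> perm_contains p m pat321 3" and n: "n \<ge> 1"
  shows "finite {w \<in> affine_perms n. \<not> aff_contains w p m}"
proof (rule finite_subset[OF _ finite_bounded_windows[OF n]])
  show "{w \<in> affine_perms n. \<not> aff_contains w p m}
      \<subseteq> {w \<in> affine_perms n. \<forall>i\<in>{1..int n}. \<bar>w i\<bar> \<le> int n * 2 ^ m + int n + 1}"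
  proof (intro subsetI CollectI conjI ballI; elim CollectE conjE)
    fix w i assume w: "w \<in> affine_perms n" and avoids: "\<not> aff_contains w p m"
      and i: "i \<in> {1..int n}"
    have "w r - w s < int n * 2 ^ m" if "r \<in> {1..int n}" "s \<in> {1..int n}" for r s
      using large_spread_contains[OF w n p av that] avoids by linarith
    then show "\<bar>w i\<bar> \<le> int n * 2 ^ m + int n + 1"
      using small_spread_bounded_window[OF w n _ i] by blast
  qed
qed

theorem theorem1:
  fixes p :: "nat \<Rightarrow> nat" and m :: nat
  assumes "m \<ge> 1" and "p permutes {1..m}"
  shows "((\<forall>n::nat. n \<ge> 2 \<longrightarrow> finite {w \<in> affine_perms n. \<not> aff_contains w p m})
            \<longleftrightarrow> \<not> perm_contains p m pat321 3)
         \<and> (perm_contains p m pat321 3 \<longrightarrow>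
            (\<forall>n::nat. n \<ge> 2 \<longrightarrow> infinite {w \<in> affine_perms n. \<not> aff_contains w p m}))"
proof -
  have infinite: "infinite {w \<in> affine_perms n. \<not> aff_contains w p m}"
    if "perm_contains p m pat321 3" "n \<ge> 2" for n
    using contains_321_infinitely_many_avoiders[OF that] .
  have finite: "finite {w \<in> affine_perms n. \<not> aff_contains w p m}"
    if "\<not> perm_contains p m pat321 3" "n \<ge> 2" for n
    using avoid_321_finitely_many_avoiders[OF assms(2) that(1)] that(2) by simp
  have "(\<forall>n::nat. n \<ge> 2 \<longrightarrow> finite {w \<in> affine_perms n. \<not> aff_contains w p m})
      \<longrightarrow> \<not> perm_contains p m pat321 3"
    using infinite[of 2] by auto
  then show ?thesis using infinite finite by blast
qed

end
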